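(* Let $\theta\in\mathbb{R}$ and let $$g=\begin{pmatrix} e^{\mathbf i\theta} & 0\\ 0 & e^{-\mathbf i\theta}\end{pmatrix},\qquad h=\begin{pmatrix} a & b\\ c & d\end{pmatrix}\in SL(2,\mathbb{C}).$$ If $\langle g,h\rangle$ is discrete and non-elementary, then $$\inf_{t\in\mathbb{C},\ |t|<1} 4f(t)\sin^2\theta\ \ge 1,$$ where $$f(t)=\frac{|1-t^2|^2(|a|^2+|d|^2)+|1+t|^4|c|^2+|1-t|^4|b|^2+2(\bar t-t)^2}{4(1-|t|^2)^2}+\frac12 .$$
   Context: $SL(2,\mathbb{C})$ acts as the group of (orientation preserving) isometries of hyperbolic $3$-space / Möbius transformations; a subgroup is non-elementary in the usual sense of Kleinian groups. Here $\mathbf i=\sqrt{-1}$. *)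

theory Defs
  imports "HOL-Analysis.Analysis"
begin

type_synonym cmat2 = "complex^2^2"

definition mk2 :: "complex \<Rightarrow> complex \<Rightarrow> complex \<Rightarrow> complex \<Rightarrow> cmat2" where
  "mk2 a b c d = (\<chi> i j. if i = 1 then (if j = 1 then a else b) else (if j = 1 then c else d))"

definition SL2C :: "cmat2 set" where
  "SL2C = {A. det A = 1}"

inductive_set gen_group :: "cmat2 set \<Rightarrow> cmat2 set" for S where
  gen_one: "mat 1 \<in> gen_group S"
| gen_base: "A \<in> S \<Longrightarrow> A \<in> gen_group S"
| gen_mult: "A \<in> gen_group S \<Longrightarrow> B \<in> gen_group S \<Longrightarrow> A ** B \<in> gen_group S"
| gen_inv: "A \<in> gen_group S \<Longrightarrow> matrix_inv A \<in> gen_group S"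

definition discrete_group :: "cmat2 set \<Rightarrow> bool" where
  "discrete_group G \<longleftrightarrow> (\<exists>e>0. \<forall>A\<in>G. norm (A - mat 1) < e \<longrightarrow> A = mat 1)"

text \<open>Points of closed hyperbolic 3-space (upper half-space model):
  Pt z t with t > 0 is the point z + t j of H^3; Pt z 0 is the boundary point z;
  Inf is the boundary point infinity.\<close>
datatype hpoint = Inf | Pt complex real

definition closed_H3 :: "hpoint set" where
  "closed_H3 = {Inf} \<union> {Pt z t | z t. t \<ge> 0}"

text \<open>Poincare extension of the Moebius action of a matrix.\<close>
fun act :: "cmat2 \<Rightarrow> hpoint \<Rightarrow> hpoint" where
  "act A Inf = (let a = A$1$1; c = A$2$1 in if c = 0 then Inf else Pt (a / c) 0)"
| "act A (Pt z t) =
     (let a = A$1$1; b = A$1$2; c = A$2$1; d = A$2$2;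
          D = (cmod (c * z + d))\<^sup>2 + (cmod c)\<^sup>2 * t\<^sup>2
      in if D = 0 then Inf
         else Pt (((a * z + b) * cnj (c * z + d) + a * cnj c * complex_of_real (t\<^sup>2)) / complex_of_real D)
                 (t / D))"

definition elementary :: "cmat2 set \<Rightarrow> bool" where
  "elementary G \<longleftrightarrow> (\<exists>x\<in>closed_H3. finite ((\<lambda>A. act A x) ` G))"

definition fthm :: "complex \<Rightarrow> complex \<Rightarrow> complex \<Rightarrow> complex \<Rightarrow> complex \<Rightarrow> real" where
  "fthm a b c d t =
     ((cmod (1 - t\<^sup>2))\<^sup>2 * ((cmod a)\<^sup>2 + (cmod d)\<^sup>2) + (cmod (1 + t))^4 * (cmod c)\<^sup>2
       + (cmod (1 - t))^4 * (cmod b)\<^sup>2 + 2 * Re ((cnj t - t)\<^sup>2))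
     / (4 * (1 - (cmod t)\<^sup>2)\<^sup>2) + 1/2"

end

theory Submission
  imports Defs
begin

text \<open>
  Write \<open>g = diag(l, cnj l)\<close> with \<open>l = exp(\<i>\<theta>)\<close>, so that \<open>|l - cnj l|\<^sup>2 = 4 sin\<^sup>2 \<theta>\<close>.
  Conjugating \<open>h\<close> by a diagonal matrix, which commutes with \<open>g\<close>, replaces \<open>b, c\<close> by
  \<open>b K, c / K\<close>; for \<open>K = (1 - t) / (1 + t)\<close> the quantity \<open>4 f(t)\<close> dominates
  \<open>|a|\<^sup>2 + |b K|\<^sup>2 + |c / K|\<^sup>2 + |d|\<^sup>2 + 2\<close>. It therefore suffices to prove the
  Jorgensen-type inequality \<open>|l - cnj l|\<^sup>2 (\<parallel>h\<parallel>\<^sup>2 + 2) \<ge> 4\<close> for every such rescaling.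

  If it fails, the sequence \<open>h\<^sub>0 = h\<close>, \<open>h\<^sub>n\<^sub>+\<^sub>1 = h\<^sub>n g h\<^sub>n\<inverse>\<close> converges to \<open>g\<close>:
  \<open>\<parallel>h\<^sub>n\<parallel>\<^sup>2 - 2\<close> decays geometrically, and then so does the product of the off-diagonal
  entries. Discreteness forces \<open>h\<^sub>n = g\<close> for some \<open>n\<close>, and running the recursion
  backwards shows that \<open>h\<close> is diagonal or antidiagonal, so the group fixes \<open>\<infinity>\<close> or
  preserves \<open>{0, \<infinity>}\<close>. The cases \<open>l = \<plusminus>1\<close> (then \<open>g = \<plusminus>I\<close> and a fixed point of \<open>h\<close> is
  fixed by the whole group) and \<open>l = \<plusminus>\<i>\<close> (then \<open>|l - cnj l|\<^sup>2 = 4\<close>) are immediate.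
\<close>

section \<open>Two-by-two complex matrices\<close>

lemma mk2_nth [simp]:
  "mk2 a b c d $ 1 $ 1 = a" "mk2 a b c d $ 1 $ 2 = b"
  "mk2 a b c d $ 2 $ 1 = c" "mk2 a b c d $ 2 $ 2 = d"
  by (simp_all add: mk2_def)

lemma mk2_eq_iff: "mk2 a b c d = mk2 a' b' c' d' \<longleftrightarrow> a = a' \<and> b = b' \<and> c = c' \<and> d = d'"
  by (metis mk2_nth)

lemma mk2_entries: "mk2 (A$1$1) (A$1$2) (A$2$1) (A$2$2) = A"
  by (simp add: vec_eq_iff forall_2)

lemma mk2_mult:
  "mk2 a b c d ** mk2 a' b' c' d' =
     mk2 (a*a' + b*c') (a*b' + b*d') (c*a' + d*c') (c*b' + d*d')"
  by (simp add: vec_eq_iff forall_2 matrix_matrix_mult_def sum_2)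

lemma mk2_diff: "mk2 a b c d - mk2 a' b' c' d' = mk2 (a - a') (b - b') (c - c') (d - d')"
  by (simp add: vec_eq_iff forall_2)

lemma mat_1_eq_mk2: "mat 1 = mk2 1 0 0 1"
  by (simp add: vec_eq_iff forall_2 mat_def)

lemma det_mk2: "det (mk2 a b c d) = a*d - b*c"
  by (simp add: det_2)

lemma norm_mk2: "(norm (mk2 a b c d))\<^sup>2 = (cmod a)\<^sup>2 + (cmod b)\<^sup>2 + (cmod c)\<^sup>2 + (cmod d)\<^sup>2"
  by (simp add: norm_vec_def L2_set_def sum_2 add.assoc)

lemma matrix_inv_eqI:
  fixes A B :: cmat2
  assumes "A ** B = mat 1" "B ** A = mat 1"
  shows "matrix_inv A = B"
proof -
  let ?C = "matrix_inv A"
  have C: "A ** ?C = mat 1 \<and> ?C ** A = mat 1"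
    unfolding matrix_inv_def by (rule someI[of _ B]) (use assms in blast)
  have "?C = ?C ** (A ** B)" using assms by simp
  also have "\<dots> = (?C ** A) ** B" by (simp add: matrix_mul_assoc)
  also have "\<dots> = B" using C by simp
  finally show ?thesis .
qed

lemma matrix_inv_mk2:
  assumes "a*d - b*c = 1"
  shows "matrix_inv (mk2 a b c d) = mk2 d (-b) (-c) a"
  by (rule matrix_inv_eqI) (use assms in \<open>auto simp: mk2_mult mat_1_eq_mk2 mk2_eq_iff algebra_simps\<close>)

lemma SL2C_iff: "mk2 a b c d \<in> SL2C \<longleftrightarrow> a*d - b*c = 1"
  by (simp add: SL2C_def det_mk2)

lemma SL2C_det: "A \<in> SL2C \<Longrightarrow> A$1$1 * A$2$2 - A$1$2 * A$2$1 = 1"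
  by (simp add: SL2C_def det_2)

lemma matrix_inv_SL2C:
  assumes "A \<in> SL2C"
  shows "matrix_inv A = mk2 (A$2$2) (- A$1$2) (- A$2$1) (A$1$1)"
  using matrix_inv_mk2[OF SL2C_det[OF assms]] by (simp only: mk2_entries)

lemma matrix_inv_mult_SL2C:
  assumes "A \<in> SL2C"
  shows "matrix_inv A ** A = mat 1"
proof -
  obtain a b c d where A: "A = mk2 a b c d" by (metis mk2_entries)
  then have "a*d - b*c = 1" using assms by (simp add: SL2C_iff)
  then show ?thesis
    unfolding A by (simp add: matrix_inv_mk2 mk2_mult mat_1_eq_mk2 algebra_simps)
qed

lemma gen_group_subset_SL2C:
  assumes "S \<subseteq> SL2C"
  shows "gen_group S \<subseteq> SL2C"
proof
  fix A assume "A \<in> gen_group S"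
  then show "A \<in> SL2C"
  proof (induction rule: gen_group.induct)
    case (gen_inv A)
    then show ?case
      unfolding matrix_inv_SL2C[OF gen_inv.IH] SL2C_iff
      using SL2C_det[OF gen_inv.IH] by (simp add: algebra_simps)
  qed (use assms in \<open>auto simp: SL2C_def det_mul\<close>)
qed

lemma gen_group_SL2C_entries_induct:
  fixes P :: "complex \<Rightarrow> complex \<Rightarrow> complex \<Rightarrow> complex \<Rightarrow> bool"
  assumes "A \<in> gen_group S" and "S \<subseteq> SL2C"
    and base: "\<And>A. A \<in> S \<Longrightarrow> P (A$1$1) (A$1$2) (A$2$1) (A$2$2)"
    and one: "P 1 0 0 1"
    and mult: "\<And>p q r u p' q' r' u'. p*u - q*r = 1 \<Longrightarrow> p'*u' - q'*r' = 1 \<Longrightarrow>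
      P p q r u \<Longrightarrow> P p' q' r' u' \<Longrightarrow>
      P (p*p' + q*r') (p*q' + q*u') (r*p' + u*r') (r*q' + u*u')"
    and inv: "\<And>p q r u. p*u - q*r = 1 \<Longrightarrow> P p q r u \<Longrightarrow> P u (-q) (-r) p"
  shows "P (A$1$1) (A$1$2) (A$2$1) (A$2$2)"
  using assms(1)
proof (induction rule: gen_group.induct)
  case gen_one
  then show ?case using one by (simp add: mat_1_eq_mk2)
next
  case (gen_base A)
  then show ?case by (rule base)
next
  case (gen_mult A B)
  have "A ** B = mk2 (A$1$1) (A$1$2) (A$2$1) (A$2$2) ** mk2 (B$1$1) (B$1$2) (B$2$1) (B$2$2)"
    by (simp only: mk2_entries)
  then show ?case
    using mult[OF SL2C_det SL2C_det gen_mult.IH] gen_mult.hyps gen_group_subset_SL2C[OF assms(2)]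
    by (auto simp: mk2_mult)
next
  case (gen_inv A)
  then have "A \<in> SL2C" using gen_group_subset_SL2C[OF assms(2)] by auto
  then show ?case
    using inv[OF SL2C_det gen_inv.IH] by (simp add: matrix_inv_SL2C)
qed

section \<open>Criteria for elementary groups\<close>

lemma elementaryI:
  assumes "x \<in> closed_H3" "finite F" "\<And>A. A \<in> G \<Longrightarrow> act A x \<in> F"
  shows "elementary G"
  unfolding elementary_def using assms by (meson finite_subset image_subsetI)

lemma elementary_upper_triangular:
  assumes "S \<subseteq> SL2C" "\<forall>A\<in>S. A$2$1 = 0"
  shows "elementary (gen_group S)"
proof (rule elementaryI[where x = Inf and F = "{Inf}"])
  fix A assume "A \<in> gen_group S"
  then have "A$2$1 = 0"
    by (rule gen_group_SL2C_entries_induct[where P = "\<lambda>p q r u. r = 0"]) (use assms in auto)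
  then show "act A Inf \<in> {Inf}" by (simp add: Let_def)
qed (auto simp: closed_H3_def)

lemma elementary_common_fixed_point:
  assumes "S \<subseteq> SL2C" "\<forall>A\<in>S. A$1$1 * z + A$1$2 = (A$2$1 * z + A$2$2) * z"
  shows "elementary (gen_group S)"
proof (rule elementaryI[where x = "Pt z 0" and F = "{Pt z 0}"])
  fix A assume A: "A \<in> gen_group S"
  define p q r u where "p = A$1$1" "q = A$1$2" "r = A$2$1" "u = A$2$2"
  have fix_z: "p*z + q = (r*z + u) * z"
    unfolding p_q_r_u_def using A
  proof (rule gen_group_SL2C_entries_induct[where P = "\<lambda>p q r u. p*z + q = (r*z + u) * z"])
    fix p q r u p' q' r' u' :: complex
    assume "p*z + q = (r*z + u) * z" "p'*z + q' = (r'*z + u') * z"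
    then show "(p*p' + q*r') * z + (p*q' + q*u') = ((r*p' + u*r') * z + (r*q' + u*u')) * z"
      by algebra
  next
    fix p q r u :: complex
    assume "p*z + q = (r*z + u) * z"
    then show "u * z + - q = (- r * z + p) * z" by algebra
  qed (use assms in auto)
  have det: "p*u - q*r = 1"
    unfolding p_q_r_u_def using A gen_group_subset_SL2C[OF assms(1)] by (auto intro: SL2C_det)
  define k where "k = r*z + u"
  have "k \<noteq> 0"
  proof
    assume "k = 0"
    then have "u = - r*z" "q = - p*z" using fix_z unfolding k_def by algebra+
    then show False using det by (simp add: algebra_simps)
  qed
  then have "act A (Pt z 0) = Pt (k * z * cnj k / complex_of_real ((cmod k)\<^sup>2)) 0"
    using fix_z unfolding p_q_r_u_def k_def by (simp add: Let_def)
  also have "\<dots> = Pt z 0"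
    unfolding complex_norm_square using \<open>k \<noteq> 0\<close> by simp
  finally show "act A (Pt z 0) \<in> {Pt z 0}" by simp
qed (auto simp: closed_H3_def)

lemma elementary_diagonal_or_antidiagonal:
  assumes "S \<subseteq> SL2C" "\<forall>A\<in>S. (A$1$2 = 0 \<and> A$2$1 = 0) \<or> (A$1$1 = 0 \<and> A$2$2 = 0)"
  shows "elementary (gen_group S)"
proof (rule elementaryI[where x = Inf and F = "{Inf, Pt 0 0}"])
  fix A assume "A \<in> gen_group S"
  then have "(A$1$2 = 0 \<and> A$2$1 = 0) \<or> (A$1$1 = 0 \<and> A$2$2 = 0)"
    by (rule gen_group_SL2C_entries_induct[where P = "\<lambda>p q r u. (q = 0 \<and> r = 0) \<or> (p = 0 \<and> u = 0)"])
      (use assms in auto)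
  then show "act A Inf \<in> {Inf, Pt 0 0}" by (auto simp: Let_def)
qed (auto simp: closed_H3_def)

lemma elementary_if_scalar_generator:
  assumes "l * cnj l = 1" "cnj l = l" "a*d - b*c = 1"
  shows "elementary (gen_group {mk2 l 0 0 (cnj l), mk2 a b c d})"
proof -
  have SL2C: "{mk2 l 0 0 (cnj l), mk2 a b c d} \<subseteq> SL2C"
    using assms by (simp add: SL2C_iff)
  show ?thesis
  proof (cases "c = 0")
    case True
    then show ?thesis by (intro elementary_upper_triangular[OF SL2C]) simp
  next
    case False
    define z where "z = ((a - d) + csqrt ((a - d)\<^sup>2 + 4*b*c)) / (2*c)"
    have "(2*c*z - (a - d))\<^sup>2 = (a - d)\<^sup>2 + 4*b*c"
      unfolding z_def using False by simp
    then have "4*c*(c*z\<^sup>2 - (a - d)*z - b) = 0" by algebra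
    then have "c*z\<^sup>2 - (a - d)*z - b = 0" using False by simp
    then have "a*z + b = (c*z + d) * z" by (simp add: algebra_simps power2_eq_square)
    then show ?thesis
      using assms(2) by (intro elementary_common_fixed_point[OF SL2C, of z]) auto
  qed
qed

section \<open>The Jorgensen recursion\<close>

definition normsq :: "complex \<Rightarrow> real" where
  "normsq z = (cmod z)\<^sup>2"

lemma of_real_normsq: "complex_of_real (normsq z) = z * cnj z"
  unfolding normsq_def by (rule complex_norm_square)

lemma normsq_nonneg [simp]: "0 \<le> normsq z"
  by (simp add: normsq_def)

lemma normsq_eq_0_iff [simp]: "normsq z = 0 \<longleftrightarrow> z = 0"
  by (simp add: normsq_def)

lemma normsq_mult: "normsq (z * w) = normsq z * normsq w"
  by (simp add: normsq_def norm_mult power_mult_distrib)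

lemma normsq_divide: "normsq (z / w) = normsq z / normsq w"
  by (simp add: normsq_def norm_divide power_divide)

lemma norm_mult_le_normsq: "2 * (cmod z * cmod w) \<le> normsq z + normsq w"
  using sum_squares_bound[of "cmod z" "cmod w"] unfolding normsq_def by (simp add: power2_eq_square)

lemma normsq_sum_ge_2:
  assumes "a*d - b*c = 1"
  shows "2 \<le> normsq a + normsq b + normsq c + normsq d"
proof -
  have "1 = cmod (a*d - b*c)" using assms by simp
  also have "\<dots> \<le> cmod a * cmod d + cmod b * cmod c"
    using norm_triangle_ineq4[of "a*d" "b*c"] by (simp add: norm_mult)
  finally show ?thesis
    using norm_mult_le_normsq[of a d] norm_mult_le_normsq[of b c] by linarith
qed

lemma normsq_sum_le_rescaled:
  assumes "K \<noteq> 0"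
  shows "normsq p + normsq q + normsq r + normsq u \<le>
    (1 + normsq K + 1 / normsq K) * (normsq p + normsq (q * K) + normsq (r / K) + normsq u)"
proof -
  define W where "W = 1 + normsq K + 1 / normsq K"
  have "0 < normsq K" using assms by (simp add: normsq_def)
  have "W * normsq K = normsq K + (normsq K)\<^sup>2 + 1" "W / normsq K = 1 / normsq K + 1 + 1 / (normsq K)\<^sup>2"
    unfolding W_def using assms by (simp_all add: field_simps power2_eq_square)
  then have "1 \<le> W" "1 \<le> W * normsq K" "1 \<le> W / normsq K"
    unfolding W_def using \<open>0 < normsq K\<close> by auto
  then have "x \<le> W * x" "x \<le> W * (x * normsq K)" "x \<le> W * (x / normsq K)" if "0 \<le> x" for x
    using mult_right_mono[OF _ that, of 1 W] mult_right_mono[OF _ that, of 1 "W * normsq K"]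
      mult_right_mono[OF _ that, of 1 "W / normsq K"] by (simp_all add: algebra_simps)
  then show ?thesis
    unfolding W_def[symmetric] distrib_left normsq_mult normsq_divide by (intro add_mono) auto
qed

lemma norm_eq_1_if_mult_cnj_eq_1:
  assumes "l * cnj l = 1"
  shows "cmod l = 1"
proof -
  have "complex_of_real ((cmod l)\<^sup>2) = 1" using assms by (simp only: complex_norm_square)
  then have "(cmod l)\<^sup>2 = 1" by (simp only: of_real_eq_1_iff)
  then show ?thesis using norm_ge_zero[of l] by (auto simp: power2_eq_1_iff)
qed

text \<open>
  The entries of \<open>h\<^sub>n\<^sub>+\<^sub>1 = h\<^sub>n g h\<^sub>n\<inverse>\<close> for \<open>g = diag(l, cnj l)\<close>, cf. \<open>conj_diagonal_SL2C\<close>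
  below. In the locale, \<open>S n = \<parallel>h\<^sub>n\<parallel>\<^sup>2\<close>, \<open>s = |l - cnj l|\<^sup>2\<close> and \<open>E n = \<parallel>h\<^sub>n - g\<parallel>\<^sup>2\<close>.
\<close>

locale jorgensen_recursion =
  fixes l :: complex and A B C D :: "nat \<Rightarrow> complex"
  assumes unimodular: "l * cnj l = 1"
    and det_0: "A 0 * D 0 - B 0 * C 0 = 1"
    and A_Suc: "A (Suc n) = A n * D n * l - B n * C n * cnj l"
    and B_Suc: "B (Suc n) = A n * B n * (cnj l - l)"
    and C_Suc: "C (Suc n) = C n * D n * (l - cnj l)"
    and D_Suc: "D (Suc n) = A n * D n * cnj l - B n * C n * l"
begin

definition S :: "nat \<Rightarrow> real" where
  "S n = normsq (A n) + normsq (B n) + normsq (C n) + normsq (D n)"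

definition s :: real where
  "s = normsq (l - cnj l)"

definition E :: "nat \<Rightarrow> real" where
  "E n = normsq (A n - l) + normsq (B n) + normsq (C n) + normsq (D n - cnj l)"

lemma scaled: "k \<noteq> 0 \<Longrightarrow> jorgensen_recursion l A (\<lambda>n. B n * k) (\<lambda>n. C n / k) D"
  by unfold_locales (use unimodular det_0 A_Suc B_Suc C_Suc D_Suc in simp_all)

lemma det: "A n * D n - B n * C n = 1"
proof (induction n)
  case (Suc n)
  have "(A n * D n - B n * C n)\<^sup>2 = 1" using Suc by simp
  then show ?case using unimodular unfolding A_Suc B_Suc C_Suc D_Suc by algebra
qed (rule det_0)

lemma S_ge_2: "2 \<le> S n"
  unfolding S_def using normsq_sum_ge_2[OF det] by simp

lemma s_nonneg: "0 \<le> s"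
  by (simp add: s_def)

lemma trace_Suc: "A (Suc n) + D (Suc n) = l + cnj l"
  using det[of n] unfolding A_Suc D_Suc by algebra

lemma BC_Suc: "B (Suc n) * C (Suc n) = s * (B n * C n) * (A n * D n)"
  unfolding B_Suc C_Suc s_def of_real_normsq by (simp add: algebra_simps)

lemma S_Suc: "S (Suc n) - 2 = s * ((normsq (A n) + normsq (C n)) * (normsq (B n) + normsq (D n)) - 1)"
proof -
  have "cnj (A n) * cnj (D n) - cnj (B n) * cnj (C n) = 1"
    using det[of n] by (metis complex_cnj_diff complex_cnj_mult complex_cnj_one)
  then have "complex_of_real (S (Suc n) - 2) =
      complex_of_real (s * ((normsq (A n) + normsq (C n)) * (normsq (B n) + normsq (D n)) - 1))"
    using det[of n] unimodular
    unfolding S_def s_def of_real_add of_real_diff of_real_mult of_real_normsq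
      A_Suc B_Suc C_Suc D_Suc
    by simp algebra
  then show ?thesis by (simp only: of_real_eq_iff)
qed

lemma E_Suc: "E (Suc n) = S (Suc n) - 2 - 2 * s * Re (B n * C n)"
proof -
  have "cnj (A n) * cnj (D n) - cnj (B n) * cnj (C n) = 1"
    using det[of n] by (metis complex_cnj_diff complex_cnj_mult complex_cnj_one)
  moreover have "complex_of_real (2 * s * Re (B n * C n)) =
      (l - cnj l) * cnj (l - cnj l) * (B n * C n + cnj (B n) * cnj (C n))"
    using complex_add_cnj[of "B n * C n"] by (simp add: s_def of_real_normsq)
  ultimately have "complex_of_real (E (Suc n)) = complex_of_real (S (Suc n) - 2 - 2 * s * Re (B n * C n))"
    using det[of n] unimodular
    unfolding E_def S_def of_real_add of_real_diff of_real_normsq A_Suc B_Suc C_Suc D_Suc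
    by (simp only: complex_cnj_mult complex_cnj_diff complex_cnj_cnj complex_cnj_add
        complex_cnj_one of_real_numeral) algebra
  then show ?thesis by (simp only: of_real_eq_iff)
qed

lemma off_diagonal_zero_Suc:
  assumes "l \<noteq> cnj l" "B (Suc n) = 0" "C (Suc n) = 0"
  shows "(B n = 0 \<and> C n = 0) \<or> (A n = 0 \<and> D n = 0)"
  using assms det[of n] unfolding B_Suc C_Suc by auto

lemma off_diagonal_zero_imp_initial:
  assumes "l \<noteq> cnj l" "l + cnj l \<noteq> 0" "B n = 0" "C n = 0"
  shows "(B 0 = 0 \<and> C 0 = 0) \<or> (A 0 = 0 \<and> D 0 = 0)"
  using assms(3,4)
proof (induction n)
  case (Suc n)
  consider "B n = 0 \<and> C n = 0" | "A n = 0 \<and> D n = 0"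
    using off_diagonal_zero_Suc[OF assms(1) Suc.prems] by blast
  then show ?case
  proof cases
    case 2
    \<comment> \<open>for \<open>n > 0\<close>, \<open>h\<^sub>n\<close> is conjugate to \<open>g\<close>, whose trace \<open>l + cnj l\<close> is nonzero\<close>
    then show ?thesis
      using trace_Suc[of "n - 1"] assms(2) by (cases n) auto
  qed (use Suc.IH in blast)
qed simp

lemma S_Suc_le: "S (Suc n) - 2 \<le> s * (S n - 2) * (S n + 2) / 4"
proof -
  have "(normsq (A n) + normsq (C n)) * (normsq (B n) + normsq (D n)) \<le> (S n)\<^sup>2 / 4"
    using sum_squares_bound[of "normsq (A n) + normsq (C n)" "normsq (B n) + normsq (D n)"]
    unfolding S_def by (simp add: power2_eq_square algebra_simps)
  then have "S (Suc n) - 2 \<le> s * ((S n)\<^sup>2 / 4 - 1)"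
    unfolding S_Suc using s_nonneg by (intro mult_left_mono) auto
  also have "\<dots> = s * (S n - 2) * (S n + 2) / 4"
    by (simp add: power2_eq_square algebra_simps)
  finally show ?thesis .
qed

lemma norm_BC_Suc_le: "2 * cmod (B (Suc n) * C (Suc n)) \<le> s * S n * cmod (B n * C n)"
proof -
  have "2 * (cmod (A n) * cmod (D n)) \<le> S n"
    using norm_mult_le_normsq[of "A n" "D n"] normsq_nonneg[of "B n"] normsq_nonneg[of "C n"]
    unfolding S_def by linarith
  then have "s * (2 * (cmod (A n) * cmod (D n))) * cmod (B n * C n) \<le> s * S n * cmod (B n * C n)"
    using s_nonneg by (intro mult_left_mono mult_right_mono) auto
  then show ?thesis
    unfolding BC_Suc using s_nonneg by (simp add: norm_mult algebra_simps)
qed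

lemma S_decay:
  assumes "s * (S 0 + 2) < 4"
  shows "S n - 2 \<le> (s * (S 0 + 2) / 4) ^ n * (S 0 - 2)"
proof (induction n)
  case (Suc n)
  define r where "r = s * (S 0 + 2) / 4"
  have r: "0 \<le> r" "r < 1"
    unfolding r_def using assms s_nonneg S_ge_2[of 0] by auto
  have "r ^ n * (S 0 - 2) \<le> S 0 - 2"
    using r S_ge_2[of 0] by (intro mult_left_le_one_le) (auto simp: power_le_one)
  then have "S n \<le> S 0" using Suc.IH unfolding r_def by linarith
  have "4 * (S (Suc n) - 2) \<le> s * (S n - 2) * (S n + 2)"
    using S_Suc_le[of n] by simp
  also have "\<dots> \<le> s * (S n - 2) * (S 0 + 2)"
    using s_nonneg S_ge_2[of n] \<open>S n \<le> S 0\<close> by (intro mult_left_mono) auto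
  also have "\<dots> = 4 * (r * (S n - 2))"
    unfolding r_def by simp
  also have "\<dots> \<le> 4 * (r * (r ^ n * (S 0 - 2)))"
    using Suc.IH r unfolding r_def by (intro mult_left_mono) auto
  finally show ?case unfolding r_def by simp
qed simp

lemma s_less_1:
  assumes "s * (S 0 + 2) < 4"
  shows "s < 1"
proof -
  have "s * 4 \<le> s * (S 0 + 2)"
    using s_nonneg S_ge_2[of 0] by (intro mult_left_mono) auto
  then show ?thesis using assms by simp
qed

lemma S_tendsto_2:
  assumes "s * (S 0 + 2) < 4"
  shows "S \<longlonglongrightarrow> 2"
proof -
  define r where "r = s * (S 0 + 2) / 4"
  have "(\<lambda>n. 2 + r ^ n * (S 0 - 2)) \<longlonglongrightarrow> 2 + 0"
    unfolding r_def using assms s_nonneg S_ge_2[of 0]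
    by (intro tendsto_add tendsto_const tendsto_mult_left_zero LIMSEQ_power_zero) auto
  then have "(\<lambda>n. 2 + r ^ n * (S 0 - 2)) \<longlonglongrightarrow> 2"
    by simp
  then show ?thesis
    by (rule tendsto_sandwich[OF _ _ tendsto_const, rotated 2])
      (use S_ge_2 S_decay[OF assms] in \<open>auto simp: r_def algebra_simps intro: always_eventually\<close>)
qed

lemma BC_tendsto_0:
  assumes "s * (S 0 + 2) < 4"
  shows "(\<lambda>n. B n * C n) \<longlonglongrightarrow> 0"
proof (rule summable_LIMSEQ_zero)
  have "s < 1" by (rule s_less_1[OF assms])
  have "eventually (\<lambda>n. S n < 2 + (1 - s)) sequentially"
    using order_tendstoD(2)[OF S_tendsto_2[OF assms]] \<open>s < 1\<close> by simp
  then obtain N where N: "\<And>n. n \<ge> N \<Longrightarrow> S n - 2 \<le> 1 - s"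
    unfolding eventually_sequentially by force
  show "summable (\<lambda>n. B n * C n)"
  proof (rule summable_ratio_test[where c = "(1 + s) / 2" and N = N])
    fix n assume "n \<ge> N"
    have "s * (S n - 2) \<le> 1 * (1 - s)"
      using N[OF \<open>n \<ge> N\<close>] s_nonneg \<open>s < 1\<close> S_ge_2[of n] by (intro mult_mono) auto
    then have "s * S n \<le> 1 + s" by (simp add: algebra_simps)
    then have "s * S n * cmod (B n * C n) \<le> (1 + s) * cmod (B n * C n)"
      by (rule mult_right_mono) simp
    then show "norm (B (Suc n) * C (Suc n)) \<le> (1 + s) / 2 * norm (B n * C n)"
      using norm_BC_Suc_le[of n] by simp
  qed (use \<open>s < 1\<close> in simp)
qed

lemma E_tendsto_0:
  assumes "s * (S 0 + 2) < 4"
  shows "E \<longlonglongrightarrow> 0"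
proof -
  have upper: "E (Suc n) \<le> (S (Suc n) - 2) + 2 * s * cmod (B n * C n)" for n
  proof -
    have "- Re (B n * C n) \<le> cmod (B n * C n)"
      using abs_Re_le_cmod[of "B n * C n"] by linarith
    then have "2 * s * (- Re (B n * C n)) \<le> 2 * s * cmod (B n * C n)"
      using s_nonneg by (intro mult_left_mono) auto
    then show ?thesis
      using E_Suc[of n] by (simp only: mult_minus_right)
  qed
  have "(\<lambda>n. (S (Suc n) - 2) + 2 * s * cmod (B n * C n)) \<longlonglongrightarrow> (2 - 2) + 2 * s * 0"
    using S_tendsto_2[OF assms] BC_tendsto_0[OF assms]
    by (intro tendsto_add tendsto_diff tendsto_mult tendsto_const LIMSEQ_Suc tendsto_norm_zero)
  then have "(\<lambda>n. (S (Suc n) - 2) + 2 * s * cmod (B n * C n)) \<longlonglongrightarrow> 0"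
    by simp
  then have "(\<lambda>n. E (Suc n)) \<longlonglongrightarrow> 0"
    by (rule tendsto_sandwich[OF _ _ tendsto_const, rotated 2])
      (use upper in \<open>auto simp: E_def intro: always_eventually\<close>)
  then show ?thesis by (rule LIMSEQ_imp_Suc)
qed

end

section \<open>Jorgensen sequences in discrete groups\<close>

primrec jorgensen_seq :: "cmat2 \<Rightarrow> cmat2 \<Rightarrow> nat \<Rightarrow> cmat2" where
  "jorgensen_seq g h 0 = h"
| "jorgensen_seq g h (Suc n) = jorgensen_seq g h n ** g ** matrix_inv (jorgensen_seq g h n)"

lemma jorgensen_seq_in_gen_group:
  assumes "g \<in> gen_group S" "h \<in> gen_group S"
  shows "jorgensen_seq g h n \<in> gen_group S"
  by (induction n) (use assms in \<open>auto intro: gen_mult gen_inv\<close>)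

lemma conj_diagonal_SL2C:
  assumes "a*d - b*c = 1"
  shows "mk2 a b c d ** mk2 l 0 0 m ** matrix_inv (mk2 a b c d) =
    mk2 (a*d*l - b*c*m) (a*b*(m - l)) (c*d*(l - m)) (a*d*m - b*c*l)"
  unfolding matrix_inv_mk2[OF assms] by (simp add: mk2_mult algebra_simps)

lemma discrete_gen_group_tendsto_imp_eq:
  assumes "discrete_group (gen_group S)" "S \<subseteq> SL2C"
    and "\<And>n. X n \<in> gen_group S" "Y \<in> gen_group S"
    and "(\<lambda>n. norm (X n ** matrix_inv Y - mat 1)) \<longlonglongrightarrow> 0"
  shows "\<exists>n. X n = Y"
proof -
  obtain e where "e > 0" and e: "\<And>Z. Z \<in> gen_group S \<Longrightarrow> norm (Z - mat 1) < e \<Longrightarrow> Z = mat 1"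
    using assms(1) unfolding discrete_group_def by blast
  obtain n where "norm (X n ** matrix_inv Y - mat 1) < e"
    using order_tendstoD(2)[OF assms(5) \<open>e > 0\<close>] by (auto dest: eventually_happens)
  moreover have "X n ** matrix_inv Y \<in> gen_group S"
    using assms(3,4) by (blast intro: gen_mult gen_inv)
  ultimately have "X n ** matrix_inv Y = mat 1" by (rule e[rotated])
  moreover have "matrix_inv Y ** Y = mat 1"
    using assms(2,4) gen_group_subset_SL2C by (blast intro: matrix_inv_mult_SL2C)
  ultimately have "X n = Y"
    by (metis matrix_mul_assoc matrix_mul_lid matrix_mul_rid)
  then show ?thesis ..
qed

lemma jorgensen_recursion_seq:
  fixes l :: complex
  defines "H \<equiv> jorgensen_seq (mk2 l 0 0 (cnj l))"
  assumes "l * cnj l = 1" "h \<in> SL2C"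
  shows "jorgensen_recursion l (\<lambda>n. H h n $1$1) (\<lambda>n. H h n $1$2) (\<lambda>n. H h n $2$1) (\<lambda>n. H h n $2$2)"
proof -
  let ?S = "{mk2 l 0 0 (cnj l), h}"
  have "?S \<subseteq> SL2C" using assms(2,3) by (simp add: SL2C_iff)
  moreover have "H h n \<in> gen_group ?S" for n
    unfolding H_def by (intro jorgensen_seq_in_gen_group gen_base) auto
  ultimately have det: "H h n $1$1 * H h n $2$2 - H h n $1$2 * H h n $2$1 = 1" for n
    using gen_group_subset_SL2C by (blast intro: SL2C_det)
  have "H h (Suc n) = mk2 (H h n $1$1) (H h n $1$2) (H h n $2$1) (H h n $2$2) ** mk2 l 0 0 (cnj l) **
      matrix_inv (mk2 (H h n $1$1) (H h n $1$2) (H h n $2$1) (H h n $2$2))" for n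
    unfolding H_def by (simp add: mk2_entries)
  then show ?thesis
    using assms(2) det[of 0] unfolding conj_diagonal_SL2C[OF det]
    by unfold_locales (simp_all add: H_def)
qed

lemma norm_mult_inv_diagonal:
  assumes "l * cnj l = 1"
  shows "(norm (mk2 p q r u ** matrix_inv (mk2 l 0 0 (cnj l)) - mat 1))\<^sup>2 =
    normsq (p - l) + normsq q + normsq r + normsq (u - cnj l)"
proof -
  have "cmod l = 1" using assms by (rule norm_eq_1_if_mult_cnj_eq_1)
  moreover have "p * cnj l - 1 = cnj l * (p - l)" "u * l - 1 = l * (u - cnj l)"
    using assms by (simp_all add: algebra_simps)
  ultimately show ?thesis
    using assms by (simp add: matrix_inv_mk2 mk2_mult mat_1_eq_mk2 mk2_diff norm_mk2 normsq_def
        norm_mult power_mult_distrib)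
qed

lemma jorgensen_seq_tendsto_generator:
  fixes l a b c d K :: complex
  defines "g \<equiv> mk2 l 0 0 (cnj l)"
  assumes "l * cnj l = 1" "a*d - b*c = 1" "K \<noteq> 0"
    and "normsq (l - cnj l) * (normsq a + normsq (b * K) + normsq (c / K) + normsq d + 2) < 4"
  shows "(\<lambda>n. norm (jorgensen_seq g (mk2 a b c d) n ** matrix_inv g - mat 1)) \<longlonglongrightarrow> 0"
proof -
  define H where "H = jorgensen_seq g (mk2 a b c d)"
  interpret J: jorgensen_recursion l "\<lambda>n. H n$1$1" "\<lambda>n. H n$1$2" "\<lambda>n. H n$2$1" "\<lambda>n. H n$2$2"
    unfolding H_def g_def using assms(2,3) by (intro jorgensen_recursion_seq) (simp_all add: SL2C_iff)
  interpret J': jorgensen_recursion l "\<lambda>n. H n$1$1" "\<lambda>n. H n$1$2 * K" "\<lambda>n. H n$2$1 / K" "\<lambda>n. H n$2$2"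
    using assms(4) by (rule J.scaled)
  have "J'.E \<longlonglongrightarrow> 0"
  proof (rule J'.E_tendsto_0)
    have "J'.S 0 = normsq a + normsq (b * K) + normsq (c / K) + normsq d"
      unfolding J'.S_def by (simp add: H_def)
    then show "J'.s * (J'.S 0 + 2) < 4"
      using assms(5) unfolding J'.s_def by simp
  qed
  have E_le: "J.E n \<le> (1 + normsq K + 1 / normsq K) * J'.E n" for n
    unfolding J.E_def J'.E_def using assms(4) by (rule normsq_sum_le_rescaled)
  have "J.E \<longlonglongrightarrow> 0"
    by (rule tendsto_sandwich[OF _ _ tendsto_const tendsto_mult_right_zero[OF \<open>J'.E \<longlonglongrightarrow> 0\<close>]])
      (use E_le in \<open>auto simp: J.E_def intro: always_eventually\<close>)
  then have "(\<lambda>n. sqrt (J.E n)) \<longlonglongrightarrow> 0"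
    using tendsto_real_sqrt by fastforce
  moreover have "norm (H n ** matrix_inv g - mat 1) = sqrt (J.E n)" for n
    using norm_mult_inv_diagonal[OF assms(2), of "H n$1$1" "H n$1$2" "H n$2$1" "H n$2$2"]
    unfolding g_def J.E_def mk2_entries by (simp add: real_sqrt_unique)
  ultimately show ?thesis unfolding H_def by simp
qed

lemma discrete_imp_elementary_if_jorgensen_small:
  fixes l a b c d K :: complex
  defines "S \<equiv> {mk2 l 0 0 (cnj l), mk2 a b c d}"
  assumes "l * cnj l = 1" "a*d - b*c = 1" "K \<noteq> 0" "cnj l \<noteq> l" "l + cnj l \<noteq> 0"
    and "normsq (l - cnj l) * (normsq a + normsq (b * K) + normsq (c / K) + normsq d + 2) < 4"
    and "discrete_group (gen_group S)"
  shows "elementary (gen_group S)"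
proof -
  define g where "g = mk2 l 0 0 (cnj l)"
  define H where "H = jorgensen_seq g (mk2 a b c d)"
  have SL2C: "S \<subseteq> SL2C" unfolding S_def using assms(2,3) by (simp add: SL2C_iff)
  have g_in: "g \<in> gen_group S" and h_in: "mk2 a b c d \<in> gen_group S"
    unfolding S_def g_def by (auto intro: gen_base)
  have H_in: "H n \<in> gen_group S" for n
    unfolding H_def using g_in h_in by (rule jorgensen_seq_in_gen_group)
  have "(\<lambda>n. norm (H n ** matrix_inv g - mat 1)) \<longlonglongrightarrow> 0"
    unfolding H_def g_def by (rule jorgensen_seq_tendsto_generator[OF assms(2-4,7)])
  then obtain n where "H n = g"
    using discrete_gen_group_tendsto_imp_eq[where X = H, OF assms(8) SL2C H_in g_in] by blast
  interpret J: jorgensen_recursion l "\<lambda>n. H n$1$1" "\<lambda>n. H n$1$2" "\<lambda>n. H n$2$1" "\<lambda>n. H n$2$2"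
    unfolding H_def g_def using assms(2,3) by (intro jorgensen_recursion_seq) (simp_all add: SL2C_iff)
  have "(b = 0 \<and> c = 0) \<or> (a = 0 \<and> d = 0)"
    using J.off_diagonal_zero_imp_initial[of n] assms(5,6) \<open>H n = g\<close> by (auto simp: H_def g_def)
  then show ?thesis
  proof
    assume "b = 0 \<and> c = 0"
    then show ?thesis
      using SL2C by (intro elementary_upper_triangular) (auto simp: S_def)
  next
    assume "a = 0 \<and> d = 0"
    then show ?thesis
      using SL2C by (intro elementary_diagonal_or_antidiagonal) (auto simp: S_def)
  qed
qed

lemma jorgensen_inequality_diagonal:
  fixes l a b c d K :: complex
  assumes "l * cnj l = 1" "a*d - b*c = 1" "K \<noteq> 0"
    and "discrete_group (gen_group {mk2 l 0 0 (cnj l), mk2 a b c d})"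
    and "\<not> elementary (gen_group {mk2 l 0 0 (cnj l), mk2 a b c d})"
  shows "4 \<le> normsq (l - cnj l) * (normsq a + normsq (b * K) + normsq (c / K) + normsq d + 2)"
proof (rule ccontr)
  assume "\<not> ?thesis"
  then have small: "normsq (l - cnj l) * (normsq a + normsq (b * K) + normsq (c / K) + normsq d + 2) < 4"
    by simp
  consider "cnj l = l" | "l + cnj l = 0" | "cnj l \<noteq> l" "l + cnj l \<noteq> 0" by blast
  then show False
  proof cases
    case 1
    then show False
      using elementary_if_scalar_generator[OF assms(1) _ assms(2)] assms(5) by simp
  next
    case 2
    then have "l - cnj l = 2 * l" by (simp add: algebra_simps eq_neg_iff_add_eq_0)
    then have "normsq (l - cnj l) = normsq 2 * normsq l"
      by (simp only: normsq_mult)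
    then have "normsq (l - cnj l) = 4"
      using norm_eq_1_if_mult_cnj_eq_1[OF assms(1)] by (simp add: normsq_def)
    moreover have "2 \<le> normsq a + normsq (b * K) + normsq (c / K) + normsq d"
      using assms(2,3) by (intro normsq_sum_ge_2) simp
    ultimately show False using small by simp
  next
    case 3
    then show False
      using discrete_imp_elementary_if_jorgensen_small[OF assms(1-3) _ _ small assms(4)] assms(5) by simp
  qed
qed

section \<open>The function \<open>f\<close>\<close>

lemma normsq_one_minus_sq: "normsq (1 - t\<^sup>2) = normsq (1 - t) * normsq (1 + t)"
proof -
  have "1 - t\<^sup>2 = (1 - t) * (1 + t)" by (simp add: algebra_simps power2_eq_square)
  then show ?thesis by (simp only: normsq_mult)
qed

lemma one_minus_norm_sq_le:
  assumes "cmod t \<le> 1"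
  shows "(1 - (cmod t)\<^sup>2)\<^sup>2 \<le> normsq (1 - t) * normsq (1 + t)"
proof -
  have "1 - (cmod t)\<^sup>2 \<le> cmod (1 - t\<^sup>2)"
    using norm_triangle_ineq2[of 1 "t\<^sup>2"] by (simp add: norm_power)
  moreover have "0 \<le> 1 - (cmod t)\<^sup>2"
    using assms by (simp add: abs_square_le_1)
  ultimately have "(1 - (cmod t)\<^sup>2)\<^sup>2 \<le> normsq (1 - t\<^sup>2)"
    unfolding normsq_def by (rule power_mono)
  then show ?thesis by (simp only: normsq_one_minus_sq)
qed

lemma fthm_eq:
  fixes a b c d t :: complex
  defines "K \<equiv> (1 - t) / (1 + t)"
  assumes "cmod t < 1"
  shows "4 * fthm a b c d t =
    normsq (1 - t) * normsq (1 + t) * (normsq a + normsq (b * K) + normsq (c / K) + normsq d - 2)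
      / (1 - (cmod t)\<^sup>2)\<^sup>2 + 4"
proof -
  define p q w where "p = normsq (1 - t)" "q = normsq (1 + t)" "w = (1 - (cmod t)\<^sup>2)\<^sup>2"
  have "t \<noteq> 1" "t \<noteq> -1" using assms(2) by auto
  then have "p > 0" "q > 0"
    unfolding p_q_w_def by (auto simp: normsq_def add_eq_0_iff)
  have "(cmod t)\<^sup>2 < 1"
    using assms(2) by (simp add: abs_square_less_1)
  then have "w > 0"
    unfolding p_q_w_def by simp
  have e1: "(cmod (1 - t\<^sup>2))\<^sup>2 = p * q"
    using normsq_one_minus_sq[of t] unfolding p_q_w_def normsq_def .
  have e2: "(cmod (1 + t)) ^ 4 = q\<^sup>2" and e3: "(cmod (1 - t)) ^ 4 = p\<^sup>2"
    unfolding p_q_w_def normsq_def by (simp_all flip: power_mult)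
  have e4: "Re ((cnj t - t)\<^sup>2) = w - p * q"
    unfolding p_q_w_def normsq_def cmod_power2 by (simp add: power2_eq_square algebra_simps)
  have "fthm a b c d t =
      (p * q * (normsq a + normsq d) + q\<^sup>2 * normsq c + p\<^sup>2 * normsq b + 2 * (w - p * q)) / (4 * w) + 1/2"
    unfolding fthm_def e1 e2 e3 e4 p_q_w_def(3)[symmetric] unfolding normsq_def[symmetric] ..
  moreover have "normsq (b * K) = normsq b * p / q" "normsq (c / K) = normsq c * q / p"
    unfolding K_def p_q_w_def by (simp_all add: normsq_mult normsq_divide)
  ultimately show ?thesis
    using \<open>p > 0\<close> \<open>q > 0\<close> \<open>w > 0\<close> unfolding p_q_w_def(3)[symmetric] p_q_w_def(1,2)[symmetric]
    by (simp add: field_simps power2_eq_square)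
qed

lemma jorgensen_sum_le_fthm:
  fixes a b c d t :: complex
  defines "K \<equiv> (1 - t) / (1 + t)"
  assumes "cmod t < 1" "a*d - b*c = 1"
  shows "normsq a + normsq (b * K) + normsq (c / K) + normsq d + 2 \<le> 4 * fthm a b c d t"
proof -
  define X where "X = normsq a + normsq (b * K) + normsq (c / K) + normsq d - 2"
  have "t \<noteq> 1" "t \<noteq> -1" using assms(2) by auto
  then have "K \<noteq> 0" unfolding K_def by (auto simp: add_eq_0_iff)
  then have "0 \<le> X" unfolding X_def using assms(3) normsq_sum_ge_2[of a d "b * K" "c / K"] by simp
  have "(cmod t)\<^sup>2 < 1" using assms(2) by (simp add: abs_square_less_1)
  then have "0 < (1 - (cmod t)\<^sup>2)\<^sup>2" by simp
  moreover have "X * (1 - (cmod t)\<^sup>2)\<^sup>2 \<le> X * (normsq (1 - t) * normsq (1 + t))"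
    using one_minus_norm_sq_le[of t] assms(2) \<open>0 \<le> X\<close> by (intro mult_left_mono) auto
  ultimately have "X \<le> normsq (1 - t) * normsq (1 + t) * X / (1 - (cmod t)\<^sup>2)\<^sup>2"
    by (simp add: field_simps)
  then show ?thesis
    using fthm_eq[OF assms(2), of a b c d] unfolding X_def K_def by simp
qed

theorem theorem1p2:
  fixes \<theta> :: real and a b c d :: complex
  assumes "mk2 a b c d \<in> SL2C"
    and "discrete_group (gen_group {mk2 (exp (\<i> * \<theta>)) 0 0 (exp (- \<i> * \<theta>)), mk2 a b c d})"
    and "\<not> elementary (gen_group {mk2 (exp (\<i> * \<theta>)) 0 0 (exp (- \<i> * \<theta>)), mk2 a b c d})"
  shows "(INF t\<in>{t. cmod t < 1}. 4 * fthm a b c d t * (sin \<theta>)\<^sup>2) \<ge> 1"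
proof (rule cINF_greatest)
  define l where "l = exp (\<i> * \<theta>)"
  have cnj_l: "cnj l = exp (- \<i> * \<theta>)" unfolding l_def by (simp add: exp_cnj)
  have "l * cnj l = 1" unfolding cnj_l unfolding l_def by (simp flip: exp_add)
  have "normsq (l - cnj l) = 4 * (sin \<theta>)\<^sup>2"
    unfolding l_def normsq_def cmod_power2 by (simp add: Re_exp Im_exp power2_eq_square)
  have "a*d - b*c = 1" using assms(1) by (simp add: SL2C_iff)
  have disc: "discrete_group (gen_group {mk2 l 0 0 (cnj l), mk2 a b c d})"
    using assms(2) unfolding cnj_l unfolding l_def .
  have nonelem: "\<not> elementary (gen_group {mk2 l 0 0 (cnj l), mk2 a b c d})"
    using assms(3) unfolding cnj_l unfolding l_def .
  fix t :: complex assume "t \<in> {t. cmod t < 1}"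
  define K where "K = (1 - t) / (1 + t)"
  have "K \<noteq> 0" using \<open>t \<in> _\<close> by (auto simp: K_def add_eq_0_iff)
  have "4 \<le> normsq (l - cnj l) * (normsq a + normsq (b * K) + normsq (c / K) + normsq d + 2)"
    by (rule jorgensen_inequality_diagonal[OF \<open>l * cnj l = 1\<close> \<open>a*d - b*c = 1\<close> \<open>K \<noteq> 0\<close> disc nonelem])
  also have "\<dots> \<le> normsq (l - cnj l) * (4 * fthm a b c d t)"
    using jorgensen_sum_le_fthm[of t a d b c] \<open>t \<in> _\<close> \<open>a*d - b*c = 1\<close>
    by (intro mult_left_mono) (simp_all add: K_def)
  finally show "1 \<le> 4 * fthm a b c d t * (sin \<theta>)\<^sup>2"
    unfolding \<open>normsq (l - cnj l) = _\<close> by simp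
qed (auto intro!: exI[where x = 0])

end
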